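(* Let $G=(V,E)$ be a graph and let $R$ be $E_{\mathbb{K}}[\mathrm{HSTAB}(G)]$ (resp. $E_{\mathbb{K}}[\mathrm{QSTAB}(G)]$, resp. $E_{\mathbb{K}}[\mathrm{TSTAB}(G)]$). If there are maximal cliques (resp. maximal cliques, resp. maximal elements of $\mathcal K(G)$) $K_1,K_2$ with $\#K_1>\#K_2$, then $\operatorname{tr}(\omega_R)\subseteq R_{\ge \#K_1-\#K_2}=\bigoplus_{n\ge\#K_1-\#K_2}R_n$.
   Context: $\mathrm{HSTAB}(G)$ is the set of $f\in\mathbb{R}^V$ with $0\le f(x)\le 1$ for all $x$, $\sum_{x\in K}f(x)\le1$ for every clique $K$, and $\sum_{x\in C}f(x)\le(\#C-1)/2$ for every odd cycle $C$; $\mathrm{QSTAB}(G)$ uses only the first two conditions; $\mathrm{TSTAB}(G)$ uses the first and third conditions and $\sum_{x\in e}f(x)\le1$ for every edge $e$. $\mathcal K(G)$ is the set of cliques of $G$ of size at most $3$. For a rational polytope $\mathcal P\subset\mathbb{R}^V$, with $V^-=V\cup\{-\infty\}$, $T^f=\prod_{x\in V^-}T_x^{f(x)}$, $\deg T_x=0$ ($x\in V$), $\deg T_{-\infty}=1$, the Ehrhart ring over a field $\mathbb{K}$ is $E_{\mathbb{K}}[\mathcal P]=\mathbb{K}[T^f\mid f\in\mathbb{Z}^{V^-}, f(-\infty)>0, f|_V/f(-\infty)\in\mathcal P]$; it is a normal Cohen–Macaulay graded domain with canonical module $\omega_R$. $\operatorname{tr}(M)=\sum_{\varphi\in\operatorname{Hom}_R(M,R)}\varphi(M)$.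 *)

theory Defs
  imports "HOL-Analysis.Analysis" "HOL-Library.Poly_Mapping"
begin

definition simple_graph :: "('v \<Rightarrow> 'v \<Rightarrow> bool) \<Rightarrow> bool" where
  "simple_graph E \<longleftrightarrow> (\<forall>x y. E x y \<longrightarrow> E y x) \<and> (\<forall>x. \<not> E x x)"

definition is_clique :: "('v \<Rightarrow> 'v \<Rightarrow> bool) \<Rightarrow> 'v set \<Rightarrow> bool" where
  "is_clique E K \<longleftrightarrow> (\<forall>x\<in>K. \<forall>y\<in>K. x \<noteq> y \<longrightarrow> E x y)"

definition is_maximal_clique :: "('v \<Rightarrow> 'v \<Rightarrow> bool) \<Rightarrow> 'v set \<Rightarrow> bool" where
  "is_maximal_clique E K \<longleftrightarrow> is_clique E K \<and> (\<forall>L. is_clique E L \<and> K \<subseteq> L \<longrightarrow> L = K)"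

definition small_cliques :: "('v \<Rightarrow> 'v \<Rightarrow> bool) \<Rightarrow> 'v set set" where
  "small_cliques E = {K. is_clique E K \<and> card K \<le> 3}"

definition is_maximal_small_clique :: "('v \<Rightarrow> 'v \<Rightarrow> bool) \<Rightarrow> 'v set \<Rightarrow> bool" where
  "is_maximal_small_clique E K \<longleftrightarrow>
     K \<in> small_cliques E \<and> (\<forall>L\<in>small_cliques E. K \<subseteq> L \<longrightarrow> L = K)"

definition is_odd_cycle :: "('v \<Rightarrow> 'v \<Rightarrow> bool) \<Rightarrow> 'v set \<Rightarrow> bool" where
  "is_odd_cycle E C \<longleftrightarrow> (\<exists>xs. distinct xs \<and> odd (length xs) \<and> 3 \<le> length xs \<and> set xs = C \<and>
      (\<forall>i<length xs. E (xs ! i) (xs ! ((i + 1) mod length xs))))"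

definition HSTAB :: "('v::finite \<Rightarrow> 'v \<Rightarrow> bool) \<Rightarrow> ('v \<Rightarrow> real) set" where
  "HSTAB E = {f. (\<forall>x. 0 \<le> f x \<and> f x \<le> 1)
     \<and> (\<forall>K. is_clique E K \<longrightarrow> (\<Sum>x\<in>K. f x) \<le> 1)
     \<and> (\<forall>C. is_odd_cycle E C \<longrightarrow> (\<Sum>x\<in>C. f x) \<le> (real (card C) - 1) / 2)}"

definition QSTAB :: "('v::finite \<Rightarrow> 'v \<Rightarrow> bool) \<Rightarrow> ('v \<Rightarrow> real) set" where
  "QSTAB E = {f. (\<forall>x. 0 \<le> f x \<and> f x \<le> 1)
     \<and> (\<forall>K. is_clique E K \<longrightarrow> (\<Sum>x\<in>K. f x) \<le> 1)}"

definition TSTAB :: "('v::finite \<Rightarrow> 'v \<Rightarrow> bool) \<Rightarrow> ('v \<Rightarrow> real) set" where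
  "TSTAB E = {f. (\<forall>x. 0 \<le> f x \<and> f x \<le> 1)
     \<and> (\<forall>x y. E x y \<longrightarrow> f x + f y \<le> 1)
     \<and> (\<forall>C. is_odd_cycle E C \<longrightarrow> (\<Sum>x\<in>C. f x) \<le> (real (card C) - 1) / 2)}"

text \<open>Laurent monomials T^f, f : V^- -> Z, with V^- = 'v option and None playing the role of -infinity.
  The ambient ring is the group algebra of Z^(V^-) over 'k, as a poly_mapping type.\<close>

definition restr_ratio :: "('v option \<Rightarrow>\<^sub>0 int) \<Rightarrow> ('v \<Rightarrow> real)" where
  "restr_ratio f = (\<lambda>x. real_of_int (Poly_Mapping.lookup f (Some x)) / real_of_int (Poly_Mapping.lookup f None))"

definition ehrhart_exps :: "('v \<Rightarrow> real) set \<Rightarrow> ('v option \<Rightarrow>\<^sub>0 int) set" where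
  "ehrhart_exps P = {f. 0 < Poly_Mapping.lookup f None \<and> restr_ratio f \<in> P}"

text \<open>The Ehrhart ring: the K-subalgebra generated by the monomials T^f, f in ehrhart_exps P.
  It is the K-span of the products of generators (including the empty product 1).\<close>
definition ehrhart_ring :: "('v \<Rightarrow> real) set \<Rightarrow> (('v option \<Rightarrow>\<^sub>0 int) \<Rightarrow>\<^sub>0 'k::field) set" where
  "ehrhart_ring P = {p. \<forall>f\<in>Poly_Mapping.keys p. \<exists>gs. set gs \<subseteq> ehrhart_exps P \<and> f = sum_list gs}"

text \<open>Canonical module (Danilov--Stanley description): K-span of the monomials T^f with f in the
  interior of the cone over P, i.e. f(-infinity) > 0 and f|V / f(-infinity) in the interior of P.\<close>
definition ehrhart_canonical :: "('v \<Rightarrow> real) set \<Rightarrow> (('v option \<Rightarrow>\<^sub>0 int) \<Rightarrow>\<^sub>0 'k::field) set" where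
  "ehrhart_canonical P = {p. \<forall>f\<in>Poly_Mapping.keys p. 0 < Poly_Mapping.lookup f None \<and> restr_ratio f \<in> interior P}"

definition module_hom ::
  "('a::comm_ring_1) set \<Rightarrow> 'a set \<Rightarrow> ('a \<Rightarrow> 'a) set" where
  "module_hom R M = {\<phi>. (\<forall>m\<in>M. \<phi> m \<in> R) \<and> (\<forall>a\<in>M. \<forall>b\<in>M. \<phi> (a + b) = \<phi> a + \<phi> b)
                        \<and> (\<forall>r\<in>R. \<forall>m\<in>M. \<phi> (r * m) = r * \<phi> m)}"

definition module_trace :: "('a::comm_ring_1) set \<Rightarrow> 'a set \<Rightarrow> 'a set" where
  "module_trace R M = {(\<Sum>i<n. \<phi> i (m i)) | (n::nat) \<phi> m. \<forall>i<n. \<phi> i \<in> module_hom R M \<and> m i \<in> M}"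

definition degree_ge :: "(('v option \<Rightarrow>\<^sub>0 int) \<Rightarrow>\<^sub>0 'k::field) set \<Rightarrow> int \<Rightarrow> (('v option \<Rightarrow>\<^sub>0 int) \<Rightarrow>\<^sub>0 'k) set" where
  "degree_ge R d = {p\<in>R. \<forall>f\<in>Poly_Mapping.keys p. d \<le> Poly_Mapping.lookup f None}"

end

(* Since the canonical module contains the invertible monomial T^b, every R-linear map phi from it
   into R is multiplication by the single Laurent polynomial h = T^(-b) phi(T^b). Every exponent z
   of R satisfies z(x) >= 0 and sum_{K2} z <= z(-inf). Applied to phi(T^a) = T^a h, where a is 1
   on K2, and to phi(T^b) = T^b h, where b lies one unit below the K2-facet of the cone, this shows
   that every exponent of h has degree at least -#K2 - 1. Exponents of the canonical module lie in the
   interior of the cone, so they are positive on V with sum_{K1} z < z(-inf), i.e. of degree at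
   least #K1 + 1. Hence everything in the trace has degree at least #K1 - #K2. *)

theory Submission
  imports Defs
begin

section \<open>Cones over polytopes and Ehrhart rings\<close>

abbreviation deg :: "('v option \<Rightarrow>\<^sub>0 int) \<Rightarrow> int"
  where "deg f \<equiv> Poly_Mapping.lookup f None"

abbreviation coord :: "('v option \<Rightarrow>\<^sub>0 int) \<Rightarrow> 'v \<Rightarrow> int"
  where "coord f x \<equiv> Poly_Mapping.lookup f (Some x)"

abbreviation T :: "('v option \<Rightarrow>\<^sub>0 int) \<Rightarrow> (('v option \<Rightarrow>\<^sub>0 int) \<Rightarrow>\<^sub>0 'k::field)"
  where "T e \<equiv> Poly_Mapping.single e 1"

lemma sum_restr_ratio:
  "(\<Sum>x\<in>S. restr_ratio f x) = real_of_int (\<Sum>x\<in>S. coord f x) / real_of_int (deg f)"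
  by (simp add: restr_ratio_def sum_divide_distrib)

lemma interior_imp_shift_mem:
  fixes f :: "'v \<Rightarrow> real"
  assumes "f \<in> interior P"
  shows "\<exists>t>0. (\<lambda>x. f x + t * c) \<in> P"
proof -
  define shift where "shift = (\<lambda>t::real. \<lambda>x. f x + t * c)"
  have "continuous_on UNIV shift"
    unfolding shift_def by (intro continuous_on_coordinatewise_then_product continuous_intros)
  then have "open (shift -` interior P)"
    using continuous_on_open_vimage[OF open_UNIV] by auto
  moreover have "0 \<in> shift -` interior P"
    using assms by (simp add: shift_def)
  ultimately obtain e where "e > 0" "ball 0 e \<subseteq> shift -` interior P"
    using openE by blast
  moreover have "e/2 \<in> ball 0 e"
    using \<open>e > 0\<close> by simp
  ultimately have "shift (e/2) \<in> P"
    using interior_subset by blast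
  with \<open>e > 0\<close> show ?thesis
    by (intro exI[of _ "e/2"]) (simp add: shift_def)
qed

lemma interior_sum_less:
  fixes f :: "'v \<Rightarrow> real"
  assumes valid: "\<And>g. g \<in> P \<Longrightarrow> c * (\<Sum>x\<in>S. g x) \<le> \<beta>"
    and "f \<in> interior P" "c \<noteq> 0" "finite S" "S \<noteq> {}"
  shows "c * (\<Sum>x\<in>S. f x) < \<beta>"
proof -
  obtain t where "t > 0" "(\<lambda>x. f x + t * c) \<in> P"
    using interior_imp_shift_mem[OF \<open>f \<in> interior P\<close>] by blast
  then have "c * (\<Sum>x\<in>S. f x) + t * c\<^sup>2 * card S \<le> \<beta>"
    using valid by (force simp: sum.distrib algebra_simps power2_eq_square)
  moreover have "0 < t * c\<^sup>2 * card S"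
    using \<open>t > 0\<close> \<open>c \<noteq> 0\<close> \<open>finite S\<close> \<open>S \<noteq> {}\<close> by (simp add: card_gt_0_iff)
  ultimately show ?thesis
    by linarith
qed

lemma ehrhart_ring_key_sum_le:
  assumes valid: "\<And>g. g \<in> P \<Longrightarrow> c * (\<Sum>x\<in>S. g x) \<le> \<beta>"
    and "p \<in> ehrhart_ring P" "z \<in> Poly_Mapping.keys p"
  shows "c * real_of_int (\<Sum>x\<in>S. coord z x) \<le> \<beta> * real_of_int (deg z)"
proof -
  obtain gs where "set gs \<subseteq> ehrhart_exps P" "z = sum_list gs"
    using assms(2,3) unfolding ehrhart_ring_def by blast
  then show ?thesis
  proof (induction gs arbitrary: z)
    case Nil
    then show ?case by simp
  next
    case (Cons g gs)
    have "0 < deg g" "restr_ratio g \<in> P"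
      using Cons.prems by (auto simp: ehrhart_exps_def)
    then have "c * real_of_int (\<Sum>x\<in>S. coord g x) \<le> \<beta> * real_of_int (deg g)"
      using valid[of "restr_ratio g"] by (simp add: sum_restr_ratio field_simps)
    with Cons show ?case
      by (simp add: lookup_add sum.distrib algebra_simps)
  qed
qed

lemma ehrhart_canonical_key_sum_less:
  assumes valid: "\<And>g. g \<in> P \<Longrightarrow> c * (\<Sum>x\<in>S. g x) \<le> \<beta>"
    and "c \<noteq> 0" "finite S" "S \<noteq> {}"
    and "p \<in> ehrhart_canonical P" "z \<in> Poly_Mapping.keys p"
  shows "c * real_of_int (\<Sum>x\<in>S. coord z x) < \<beta> * real_of_int (deg z)"
proof -
  have "0 < deg z" "restr_ratio z \<in> interior P"
    using assms(5,6) unfolding ehrhart_canonical_def by auto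
  then show ?thesis
    using interior_sum_less[of P c S \<beta> "restr_ratio z"] assms(1-4) by (simp add: sum_restr_ratio field_simps)
qed

lemma lookup_single_mult:
  fixes h :: "'a::cancel_comm_monoid_add \<Rightarrow>\<^sub>0 'b::comm_semiring_1"
  shows "Poly_Mapping.lookup (Poly_Mapping.single c a * h) (c + g) = a * Poly_Mapping.lookup h g"
  by (simp add: lookup_mult lookup_single when_mult Sum_any_right_distrib[symmetric])

lemma zero_mem_ehrhart_ring: "0 \<in> ehrhart_ring P"
  unfolding ehrhart_ring_def by simp

lemma ehrhart_canonical_subset_ring:
  "ehrhart_canonical P \<subseteq> (ehrhart_ring P :: (('v option \<Rightarrow>\<^sub>0 int) \<Rightarrow>\<^sub>0 'k::field) set)"
proof
  fix p :: "('v option \<Rightarrow>\<^sub>0 int) \<Rightarrow>\<^sub>0 'k" assume p: "p \<in> ehrhart_canonical P"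
  show "p \<in> ehrhart_ring P"
    unfolding ehrhart_ring_def
  proof (intro CollectI ballI)
    fix f assume "f \<in> Poly_Mapping.keys p"
    then have "set [f] \<subseteq> ehrhart_exps P"
      using p interior_subset unfolding ehrhart_canonical_def ehrhart_exps_def by auto
    then show "\<exists>gs. set gs \<subseteq> ehrhart_exps P \<and> f = sum_list gs"
      by (intro exI[of _ "[f]"]) simp
  qed
qed

lemma ehrhart_ring_add:
  assumes "p \<in> ehrhart_ring P" "q \<in> ehrhart_ring P"
  shows "p + q \<in> ehrhart_ring P"
proof -
  have "\<forall>f\<in>Poly_Mapping.keys p \<union> Poly_Mapping.keys q. \<exists>gs. set gs \<subseteq> ehrhart_exps P \<and> f = sum_list gs"
    using assms unfolding ehrhart_ring_def by auto
  then show ?thesis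
    unfolding ehrhart_ring_def using keys_add[of p q] by auto
qed

lemma degree_ge_ehrhart_ring_add:
  assumes "p \<in> degree_ge (ehrhart_ring P) d" "q \<in> degree_ge (ehrhart_ring P) d"
  shows "p + q \<in> degree_ge (ehrhart_ring P) d"
proof -
  have "p + q \<in> ehrhart_ring P"
    using assms by (intro ehrhart_ring_add) (simp_all add: degree_ge_def)
  moreover have "\<forall>f\<in>Poly_Mapping.keys p \<union> Poly_Mapping.keys q. d \<le> Poly_Mapping.lookup f None"
    using assms unfolding degree_ge_def by auto
  ultimately show ?thesis
    unfolding degree_ge_def using keys_add[of p q] by auto
qed

lemma module_hom_eq_mult:
  fixes \<phi> :: "'a::comm_ring_1 \<Rightarrow> 'a"
  assumes "\<phi> \<in> Defs.module_hom R M" "M \<subseteq> R" "u \<in> M" "v * u = 1" "w \<in> M"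
  shows "\<phi> w = w * (v * \<phi> u)"
proof -
  have linear: "\<phi> (r * m) = r * \<phi> m" if "r \<in> R" "m \<in> M" for r m
    using assms(1) that unfolding Defs.module_hom_def by blast
  have "u * \<phi> w = \<phi> (u * w)"
    using linear[of u w] assms(2,3,5) by auto
  also have "\<dots> = \<phi> (w * u)"
    by (simp add: mult.commute)
  also have "\<dots> = w * \<phi> u"
    using linear[of w u] assms(2,3,5) by auto
  finally have "v * u * \<phi> w = v * (w * \<phi> u)"
    by (simp add: mult.assoc)
  then have "\<phi> w = v * (w * \<phi> u)"
    using assms(4) by simp
  then show ?thesis
    by (simp add: mult.left_commute)
qed

lemma module_trace_subset:
  assumes "0 \<in> S" "\<And>a b. a \<in> S \<Longrightarrow> b \<in> S \<Longrightarrow> a + b \<in> S"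
    and "\<And>\<phi> m. \<phi> \<in> Defs.module_hom R M \<Longrightarrow> m \<in> M \<Longrightarrow> \<phi> m \<in> S"
  shows "module_trace R M \<subseteq> S"
proof
  fix p assume "p \<in> module_trace R M"
  then obtain n :: nat and \<phi> m where p: "p = (\<Sum>i<n. \<phi> i (m i))"
    and hom: "\<forall>i<n. \<phi> i \<in> Defs.module_hom R M \<and> m i \<in> M"
    unfolding module_trace_def by blast
  have "(\<Sum>i<k. \<phi> i (m i)) \<in> S" if "k \<le> n" for k
    using that
  proof (induction k)
    case (Suc k)
    then show ?case using assms(2,3) hom by simp
  qed (simp add: assms(1))
  then show "p \<in> S"
    using p by blast
qed

lemma ehrhart_canonical_key_deg_ge:
  fixes P :: "('v::finite \<Rightarrow> real) set"
  assumes nonneg: "\<And>f x. f \<in> P \<Longrightarrow> 0 \<le> f x"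
    and clique: "\<And>f. f \<in> P \<Longrightarrow> (\<Sum>x\<in>K. f x) \<le> 1"
    and "p \<in> ehrhart_canonical P" "z \<in> Poly_Mapping.keys p"
  shows "int (card K) + 1 \<le> deg z"
proof -
  have "0 < coord z x" for x
  proof -
    have "(-1) * real_of_int (\<Sum>y\<in>{x}. coord z y) < 0 * real_of_int (deg z)"
      by (rule ehrhart_canonical_key_sum_less[OF _ _ _ _ assms(3,4)]) (use nonneg in auto)
    then show ?thesis by simp
  qed
  then have "int (card K) \<le> (\<Sum>x\<in>K. coord z x)"
    using sum_mono[of K "\<lambda>_. 1" "coord z"] by (simp add: int_one_le_iff_zero_less)
  moreover have "(\<Sum>x\<in>K. coord z x) < deg z"
  proof (cases "K = {}")
    case True
    then show ?thesis using assms(3,4) by (simp add: ehrhart_canonical_def)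
  next
    case False
    have "1 * real_of_int (\<Sum>x\<in>K. coord z x) < 1 * real_of_int (deg z)"
      by (rule ehrhart_canonical_key_sum_less[OF _ _ _ _ assms(3,4)]) (use clique False in auto)
    then show ?thesis by (simp del: of_int_sum)
  qed
  ultimately show ?thesis by linarith
qed

lemma hom_multiplier_key_deg_ge:
  fixes P :: "('v::finite \<Rightarrow> real) set" and h :: "('v option \<Rightarrow>\<^sub>0 int) \<Rightarrow>\<^sub>0 'k::field"
  assumes nonneg: "\<And>f x. f \<in> P \<Longrightarrow> 0 \<le> f x"
    and clique: "\<And>f. f \<in> P \<Longrightarrow> (\<Sum>x\<in>K. f x) \<le> 1"
    and a: "\<And>x. x \<in> K \<Longrightarrow> coord a x = 1" and b: "(\<Sum>x\<in>K. coord b x) = deg b - 1"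
    and "T a * h \<in> ehrhart_ring P" "T b * h \<in> ehrhart_ring P" "g \<in> Poly_Mapping.keys h"
  shows "- int (card K) - 1 \<le> deg g"
proof -
  have keys: "a + g \<in> Poly_Mapping.keys (T a * h)" "b + g \<in> Poly_Mapping.keys (T b * h)"
    using \<open>g \<in> Poly_Mapping.keys h\<close> by (simp_all add: in_keys_iff lookup_single_mult)
  have "-1 \<le> coord g x" if "x \<in> K" for x
  proof -
    have "(-1) * real_of_int (\<Sum>y\<in>{x}. coord (a + g) y) \<le> 0 * real_of_int (deg (a + g))"
      by (rule ehrhart_ring_key_sum_le[OF _ assms(5) keys(1)]) (use nonneg in auto)
    then show ?thesis using a[OF that] by (simp add: lookup_add)
  qed
  then have "- int (card K) \<le> (\<Sum>x\<in>K. coord g x)"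
    using sum_mono[of K "\<lambda>_. -1" "coord g"] by simp
  moreover have "1 * real_of_int (\<Sum>x\<in>K. coord (b + g) x) \<le> 1 * real_of_int (deg (b + g))"
    by (rule ehrhart_ring_key_sum_le[OF _ assms(6) keys(2)]) (use clique in auto)
  then have "(\<Sum>x\<in>K. coord g x) \<le> deg g + 1"
    using b by (simp add: lookup_add sum.distrib del: of_int_sum)
  ultimately show ?thesis by linarith
qed

lemma ehrhart_trace_subset_degree_ge:
  fixes P :: "('v::finite \<Rightarrow> real) set"
  assumes nonneg: "\<And>f x. f \<in> P \<Longrightarrow> 0 \<le> f x"
    and K1: "\<And>f. f \<in> P \<Longrightarrow> (\<Sum>x\<in>K1. f x) \<le> 1"
    and K2: "\<And>f. f \<in> P \<Longrightarrow> (\<Sum>x\<in>K2. f x) \<le> 1"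
    and a: "0 < deg a" "restr_ratio a \<in> interior P" "\<And>x. x \<in> K2 \<Longrightarrow> coord a x = 1"
    and b: "0 < deg b" "restr_ratio b \<in> interior P" "(\<Sum>x\<in>K2. coord b x) = deg b - 1"
  shows "module_trace (ehrhart_ring P :: (('v option \<Rightarrow>\<^sub>0 int) \<Rightarrow>\<^sub>0 'k::field) set) (ehrhart_canonical P)
    \<subseteq> degree_ge (ehrhart_ring P) (int (card K1) - int (card K2))"
proof (rule module_trace_subset)
  let ?R = "ehrhart_ring P :: (('v option \<Rightarrow>\<^sub>0 int) \<Rightarrow>\<^sub>0 'k) set"
  let ?W = "ehrhart_canonical P :: (('v option \<Rightarrow>\<^sub>0 int) \<Rightarrow>\<^sub>0 'k) set"
  show "0 \<in> degree_ge ?R (int (card K1) - int (card K2))"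
    by (simp add: degree_ge_def zero_mem_ehrhart_ring)
  show "p + q \<in> degree_ge ?R (int (card K1) - int (card K2))"
    if "p \<in> degree_ge ?R (int (card K1) - int (card K2))"
      "q \<in> degree_ge ?R (int (card K1) - int (card K2))" for p q
    using that by (rule degree_ge_ehrhart_ring_add)
  fix \<phi> m assume \<phi>: "\<phi> \<in> Defs.module_hom ?R ?W" and m: "m \<in> ?W"
  have Ta: "T a \<in> ?W" and Tb: "T b \<in> ?W"
    using a b by (simp_all add: ehrhart_canonical_def)
  define h where "h = T (- b) * \<phi> (T b)"
  have \<phi>_eq: "\<phi> w = w * h" if "w \<in> ?W" for w
    unfolding h_def
    by (rule module_hom_eq_mult[OF \<phi> ehrhart_canonical_subset_ring Tb _ that]) (simp add: mult_single)
  have \<phi>_mem: "\<phi> w \<in> ?R" if "w \<in> ?W" for w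
    using \<phi> that unfolding Defs.module_hom_def by blast
  have shifts: "T a * h \<in> ?R" "T b * h \<in> ?R"
    using \<phi>_mem[OF Ta] \<phi>_mem[OF Tb] \<phi>_eq[OF Ta] \<phi>_eq[OF Tb] by simp_all
  have "int (card K1) - int (card K2) \<le> deg e" if "e \<in> Poly_Mapping.keys (\<phi> m)" for e
  proof -
    have "e \<in> Poly_Mapping.keys (m * h)"
      using that \<phi>_eq[OF m] by simp
    then obtain z g where "z \<in> Poly_Mapping.keys m" "g \<in> Poly_Mapping.keys h" "e = z + g"
      using keys_mult[of m h] by blast
    moreover have "int (card K1) + 1 \<le> deg z"
      using ehrhart_canonical_key_deg_ge[of P K1 m z] nonneg K1 m \<open>z \<in> _\<close> by blast
    moreover have "- int (card K2) - 1 \<le> deg g"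
      using hom_multiplier_key_deg_ge[of P K2 a b h g] nonneg K2 a(3) b(3) shifts \<open>g \<in> _\<close>
      by blast
    ultimately show ?thesis
      by (simp add: lookup_add)
  qed
  with \<phi>_mem[OF m] show "\<phi> m \<in> degree_ge ?R (int (card K1) - int (card K2))"
    unfolding degree_ge_def by blast
qed

section \<open>Interior lattice points\<close>

definition cone_exp :: "int \<Rightarrow> ('v::finite \<Rightarrow> int) \<Rightarrow> 'v option \<Rightarrow>\<^sub>0 int" where
  "cone_exp d w = Abs_poly_mapping (case_option d w)"

lemma deg_cone_exp [simp]: "deg (cone_exp d w) = d"
  and coord_cone_exp [simp]: "coord (cone_exp d w) x = w x"
  by (simp_all add: cone_exp_def)

definition uniform_exp :: "'v::finite option \<Rightarrow>\<^sub>0 int" where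
  "uniform_exp = cone_exp (int CARD('v) + 1) (\<lambda>_. 1)"

definition facet_weight :: "'v::finite set \<Rightarrow> 'v \<Rightarrow> int" where
  "facet_weight K x = (if x \<in> K then int CARD('v) else 1)"

(* The K-coordinates sum to the degree minus one, so the point lies one unit below the hyperplane
   sum_K z = z(-inf); the large weight on K keeps every other constraint strict. *)
definition near_facet_exp :: "'v::finite set \<Rightarrow> 'v option \<Rightarrow>\<^sub>0 int" where
  "near_facet_exp K = cone_exp (int CARD('v) * int (card K) + 1) (facet_weight K)"

lemma uniform_point_pos: "0 < restr_ratio (uniform_exp :: 'v::finite option \<Rightarrow>\<^sub>0 int) x"
  by (simp add: uniform_exp_def restr_ratio_def)

lemma uniform_point_sum_less:
  fixes S :: "'v::finite set"
  shows "(\<Sum>x\<in>S. restr_ratio uniform_exp x) < 1"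
proof -
  have "card S \<le> CARD('v)"
    by (rule card_mono) auto
  then show ?thesis
    by (simp add: uniform_exp_def sum_restr_ratio)
qed

lemma uniform_point_cycle_sum_less:
  fixes C :: "'v::finite set"
  assumes "3 \<le> card C"
  shows "(\<Sum>x\<in>C. restr_ratio uniform_exp x) < (real (card C) - 1) / 2"
proof -
  have "1 \<le> (real (card C) - 1) / 2"
    using assms by simp
  then show ?thesis
    using uniform_point_sum_less[of C] by linarith
qed

lemma sum_facet_weight:
  fixes S K :: "'v::finite set"
  shows "(\<Sum>x\<in>S. facet_weight K x) = int CARD('v) * int (card (S \<inter> K)) + int (card (S - K))"
  using sum.Int_Diff[of S "facet_weight K" K] by (simp add: facet_weight_def)

lemma sum_facet_weight_le:
  fixes S K :: "'v::finite set"
  assumes "K \<subseteq> S \<Longrightarrow> S = K"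
  shows "(\<Sum>x\<in>S. facet_weight K x) \<le> int CARD('v) * int (card K)"
proof (cases "K \<subseteq> S")
  case True
  then show ?thesis
    using assms by (simp add: sum_facet_weight)
next
  case False
  then have "card (S \<inter> K) < card K"
    by (intro psubset_card_mono) auto
  then have "int CARD('v) * int (card (S \<inter> K)) \<le> int CARD('v) * (int (card K) - 1)"
    by (intro mult_left_mono) auto
  moreover have "card (S - K) \<le> CARD('v)"
    by (rule card_mono) auto
  ultimately show ?thesis
    by (simp add: sum_facet_weight algebra_simps)
qed

lemma sum_facet_weight_cycle_less:
  fixes C K :: "'v::finite set"
  assumes "3 \<le> card C" "odd (card C)" "K \<noteq> {}" and triangle: "card C = 3 \<Longrightarrow> K \<subseteq> C \<Longrightarrow> C = K"
  shows "2 * (\<Sum>x\<in>C. facet_weight K x) < (int (card C) - 1) * (int CARD('v) * int (card K) + 1)"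
proof -
  define N c k j r where "N = int CARD('v)" and "c = int (card C)" and "k = int (card K)"
    and "j = int (card (C \<inter> K))" and "r = int (card (C - K))"
  have "c \<le> N" "r \<le> c" "j \<le> k"
    by (simp_all add: N_def c_def k_def j_def r_def card_mono)
  have "1 \<le> k" "3 \<le> c"
    using assms(1,3) by (simp_all add: k_def c_def Suc_le_eq card_gt_0_iff)
  have "2 * (N * j + r) < (c - 1) * (N * k + 1)"
  proof (cases "card C = 3 \<and> K \<subseteq> C")
    case True
    then have "j = 3" "k = 3" "r = 0" "c = 3"
      using triangle by (simp_all add: j_def k_def r_def c_def)
    then show ?thesis by simp
  next
    case False
    have "2 * j + 2 \<le> (c - 1) * k"
    proof (cases "card C = 3")
      case True
      with False have "card (C \<inter> K) < card K"
        by (intro psubset_card_mono) auto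
      with True show ?thesis
        by (simp add: j_def k_def c_def)
    next
      case False
      have "card C \<noteq> 4"
        using assms(2) by auto
      with False assms(1) have "5 \<le> c"
        by (simp add: c_def)
      then have "4 * k \<le> (c - 1) * k"
        using \<open>1 \<le> k\<close> by (intro mult_right_mono) auto
      with \<open>j \<le> k\<close> \<open>1 \<le> k\<close> show ?thesis by linarith
    qed
    then have "N * (2 * j + 2) \<le> N * ((c - 1) * k)"
      using \<open>c \<le> N\<close> \<open>3 \<le> c\<close> by (intro mult_left_mono) auto
    moreover have "(c - 1) * (N * k + 1) = N * ((c - 1) * k) + (c - 1)"
      by (simp add: algebra_simps)
    ultimately show ?thesis
      using \<open>r \<le> c\<close> \<open>c \<le> N\<close> \<open>3 \<le> c\<close> by (simp add: algebra_simps)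
  qed
  then show ?thesis
    by (simp add: sum_facet_weight N_def c_def k_def j_def r_def)
qed

lemma near_facet_deg_pos: "0 < real CARD('v::finite) * real (card (K :: 'v set)) + 1"
  by (simp add: add_nonneg_pos)

lemma near_facet_point_pos: "0 < restr_ratio (near_facet_exp K) x"
  using near_facet_deg_pos[of K]
  by (simp add: near_facet_exp_def facet_weight_def restr_ratio_def)

lemma near_facet_point_sum_less:
  fixes S K :: "'v::finite set"
  assumes "K \<subseteq> S \<Longrightarrow> S = K"
  shows "(\<Sum>x\<in>S. restr_ratio (near_facet_exp K) x) < 1"
proof -
  have "real_of_int (\<Sum>x\<in>S. facet_weight K x) \<le> real_of_int (int CARD('v) * int (card K))"
    using sum_facet_weight_le[OF assms] by (simp only: of_int_le_iff)
  then show ?thesis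
    using near_facet_deg_pos[of K]
    by (simp add: near_facet_exp_def sum_restr_ratio divide_less_eq del: of_int_sum)
qed

lemma near_facet_point_cycle_sum_less:
  fixes C K :: "'v::finite set"
  assumes "3 \<le> card C" "odd (card C)" "K \<noteq> {}" "card C = 3 \<Longrightarrow> K \<subseteq> C \<Longrightarrow> C = K"
  shows "(\<Sum>x\<in>C. restr_ratio (near_facet_exp K) x) < (real (card C) - 1) / 2"
proof -
  define D where "D = real CARD('v) * real (card K) + 1"
  have "real_of_int (2 * (\<Sum>x\<in>C. facet_weight K x))
    < real_of_int ((int (card C) - 1) * (int CARD('v) * int (card K) + 1))"
    using sum_facet_weight_cycle_less[OF assms] by (simp only: of_int_less_iff)
  then have "real_of_int (\<Sum>x\<in>C. facet_weight K x) < (real (card C) - 1) / 2 * D"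
    by (simp add: D_def del: of_int_sum)
  moreover have "(\<Sum>x\<in>C. restr_ratio (near_facet_exp K) x) = real_of_int (\<Sum>x\<in>C. facet_weight K x) / D"
    by (simp add: near_facet_exp_def sum_restr_ratio D_def del: of_int_sum)
  ultimately show ?thesis
    using near_facet_deg_pos[of K] by (simp add: pos_divide_less_eq D_def)
qed

lemma ehrhart_trace_subset_degree_ge_witnesses:
  fixes P :: "('v::finite \<Rightarrow> real) set"
  assumes "\<And>f x. f \<in> P \<Longrightarrow> 0 \<le> f x"
    and "\<And>f. f \<in> P \<Longrightarrow> (\<Sum>x\<in>K1. f x) \<le> 1" "\<And>f. f \<in> P \<Longrightarrow> (\<Sum>x\<in>K2. f x) \<le> 1"
    and "restr_ratio uniform_exp \<in> interior P" "restr_ratio (near_facet_exp K2) \<in> interior P"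
  shows "module_trace (ehrhart_ring P :: (('v option \<Rightarrow>\<^sub>0 int) \<Rightarrow>\<^sub>0 'k::field) set) (ehrhart_canonical P)
    \<subseteq> degree_ge (ehrhart_ring P) (int (card K1) - int (card K2))"
proof (rule ehrhart_trace_subset_degree_ge[of P K1 K2 uniform_exp "near_facet_exp K2"])
  show "0 < deg (uniform_exp :: 'v option \<Rightarrow>\<^sub>0 int)" "coord (uniform_exp :: 'v option \<Rightarrow>\<^sub>0 int) x = 1" for x
    by (simp_all add: uniform_exp_def)
  show "0 < deg (near_facet_exp K2)"
    by (simp add: near_facet_exp_def add_nonneg_pos)
  show "(\<Sum>x\<in>K2. coord (near_facet_exp K2) x) = deg (near_facet_exp K2) - 1"
    by (simp add: near_facet_exp_def sum_facet_weight)
qed (fact assms)+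

section \<open>Stable set polytopes of graphs\<close>

lemma interior_of_strict_sum_constraints:
  fixes f :: "'v::finite \<Rightarrow> real" and A :: "('v set \<times> real) set"
  assumes "finite A" "\<And>x. 0 < f x" "\<And>S b. (S, b) \<in> A \<Longrightarrow> (\<Sum>x\<in>S. f x) < b"
    and "\<And>g. (\<And>x. 0 \<le> g x) \<Longrightarrow> (\<And>S b. (S, b) \<in> A \<Longrightarrow> (\<Sum>x\<in>S. g x) \<le> b) \<Longrightarrow> g \<in> P"
  shows "f \<in> interior P"
proof -
  define U where "U = {g::'v \<Rightarrow> real. (\<forall>x. 0 < g x) \<and> (\<forall>(S, b)\<in>A. (\<Sum>x\<in>S. g x) < b)}"
  have "U = (\<Inter>x. {g. 0 < g x}) \<inter> (\<Inter>(S, b)\<in>A. {g. (\<Sum>x\<in>S. g x) < b})"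
    unfolding U_def by auto
  also have "open \<dots>"
    using assms(1) by (intro open_Int open_INT) (auto intro!: open_Collect_less continuous_intros)
  finally have "open U" .
  moreover have "f \<in> U"
    using assms(2,3) unfolding U_def by auto
  moreover have "U \<subseteq> P"
  proof
    fix g assume "g \<in> U"
    then show "g \<in> P"
      by (intro assms(4)) (auto simp: U_def intro: less_imp_le)
  qed
  ultimately show ?thesis
    by (rule interiorI)
qed

lemma odd_cycle_card:
  assumes "is_odd_cycle E C"
  shows "3 \<le> card C" "odd (card C)"
  using assms distinct_card unfolding is_odd_cycle_def by fastforce+

lemma triangle_is_clique:
  assumes "simple_graph E" "is_odd_cycle E C" "card C = 3"
  shows "is_clique E C"
proof -
  obtain xs where xs: "distinct xs" "set xs = C"
    "\<forall>i<length xs. E (xs ! i) (xs ! ((i + 1) mod length xs))"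
    using assms(2) unfolding is_odd_cycle_def by blast
  then have "length xs = 3"
    using assms(3) distinct_card by fastforce
  then obtain a b c where "xs = [a, b, c]"
    by (auto simp: numeral_3_eq_3 length_Suc_conv)
  moreover have "E a b" "E b c" "E c a"
    using xs(3)[rule_format, of 0] xs(3)[rule_format, of 1] xs(3)[rule_format, of 2]
    unfolding \<open>xs = [a, b, c]\<close> by simp_all
  ultimately show ?thesis
    using assms(1) xs(2) unfolding is_clique_def simple_graph_def by auto
qed

lemma clique_of_card_3_is_odd_cycle:
  assumes "is_clique E K" "card K = 3"
  shows "is_odd_cycle E K"
proof -
  obtain x y z where K: "K = {x, y, z}" "x \<noteq> y" "y \<noteq> z" "x \<noteq> z"
    using assms(2) by (meson card_3_iff)
  then have "E x y" "E y z" "E z x"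
    using assms(1) unfolding is_clique_def by auto
  have "E ([x, y, z] ! i) ([x, y, z] ! ((i + 1) mod 3))" if "i < 3" for i
  proof -
    have "i = 0 \<or> i = 1 \<or> i = 2"
      using that by auto
    then show ?thesis
      using \<open>E x y\<close> \<open>E y z\<close> \<open>E z x\<close> by (elim disjE) simp_all
  qed
  with K show ?thesis
    unfolding is_odd_cycle_def by (intro exI[of _ "[x, y, z]"]) simp
qed

lemma TSTAB_clique_sum_le:
  assumes "f \<in> TSTAB E" "is_clique E K" "card K \<le> 3"
  shows "(\<Sum>x\<in>K. f x) \<le> 1"
proof -
  have "card K = 0 \<or> card K = 1 \<or> card K = 2 \<or> card K = 3"
    using assms(3) by linarith
  then show ?thesis
  proof (elim disjE)
    assume "card K = 0"
    then show ?thesis by (simp add: card_eq_0_iff)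
  next
    assume "card K = 1"
    then obtain x where "K = {x}" by (meson card_1_singletonE)
    then show ?thesis using assms(1) by (simp add: TSTAB_def)
  next
    assume "card K = 2"
    then obtain x y where "K = {x, y}" "x \<noteq> y" by (meson card_2_iff)
    moreover have "E x y"
      using assms(2) calculation unfolding is_clique_def by auto
    ultimately show ?thesis using assms(1) by (simp add: TSTAB_def)
  next
    assume "card K = 3"
    then have "is_odd_cycle E K"
      using assms(2) by (rule clique_of_card_3_is_odd_cycle[rotated])
    with \<open>card K = 3\<close> show ?thesis
      using assms(1) by (force simp: TSTAB_def)
  qed
qed

lemma maximal_clique_nonempty:
  assumes "is_maximal_clique E K"
  shows "K \<noteq> {}"
proof
  assume "K = {}"
  moreover have "is_clique E {undefined}"
    by (simp add: is_clique_def)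
  ultimately show False
    using assms unfolding is_maximal_clique_def by blast
qed

lemma maximal_small_clique_nonempty:
  assumes "is_maximal_small_clique E K"
  shows "K \<noteq> {}"
proof
  assume "K = {}"
  moreover have "{undefined} \<in> small_cliques E"
    by (simp add: small_cliques_def is_clique_def)
  ultimately show False
    using assms unfolding is_maximal_small_clique_def by blast
qed

lemma HSTAB_interiorI:
  assumes "\<And>x. 0 < f x" "\<And>K. is_clique E K \<Longrightarrow> (\<Sum>x\<in>K. f x) < 1"
    and "\<And>C. is_odd_cycle E C \<Longrightarrow> (\<Sum>x\<in>C. f x) < (real (card C) - 1) / 2"
  shows "f \<in> interior (HSTAB E)"
proof (rule interior_of_strict_sum_constraints[where A =
    "(\<lambda>K. (K, 1)) ` Collect (is_clique E) \<union> (\<lambda>C. (C, (real (card C) - 1) / 2)) ` Collect (is_odd_cycle E)"])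
  fix g :: "'a \<Rightarrow> real"
  assume "\<And>x. 0 \<le> g x" and le: "\<And>S b. (S, b) \<in>
    (\<lambda>K. (K, 1)) ` Collect (is_clique E) \<union> (\<lambda>C. (C, (real (card C) - 1) / 2)) ` Collect (is_odd_cycle E)
    \<Longrightarrow> (\<Sum>x\<in>S. g x) \<le> b"
  moreover have "g x \<le> 1" for x
    using le[of "{x}" 1] by (simp add: is_clique_def)
  moreover have "(\<Sum>x\<in>K. g x) \<le> 1" if "is_clique E K" for K
    using le[of K 1] that by blast
  moreover have "(\<Sum>x\<in>C. g x) \<le> (real (card C) - 1) / 2" if "is_odd_cycle E C" for C
    using le[of C "(real (card C) - 1) / 2"] that by blast
  ultimately show "g \<in> HSTAB E"
    unfolding HSTAB_def by blast
qed (use assms in auto)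

lemma QSTAB_interiorI:
  assumes "\<And>x. 0 < f x" "\<And>K. is_clique E K \<Longrightarrow> (\<Sum>x\<in>K. f x) < 1"
  shows "f \<in> interior (QSTAB E)"
proof (rule interior_of_strict_sum_constraints[where A = "(\<lambda>K. (K, 1)) ` Collect (is_clique E)"])
  fix g :: "'a \<Rightarrow> real"
  assume "\<And>x. 0 \<le> g x" and le: "\<And>S b. (S, b) \<in> (\<lambda>K. (K, 1)) ` Collect (is_clique E) \<Longrightarrow> (\<Sum>x\<in>S. g x) \<le> b"
  moreover have "g x \<le> 1" for x
    using le[of "{x}" 1] by (simp add: is_clique_def)
  moreover have "(\<Sum>x\<in>K. g x) \<le> 1" if "is_clique E K" for K
    using le[of K 1] that by blast
  ultimately show "g \<in> QSTAB E"
    unfolding QSTAB_def by blast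
qed (use assms in auto)

lemma TSTAB_interiorI:
  assumes "simple_graph E"
    and "\<And>x. 0 < f x" "\<And>K. is_clique E K \<Longrightarrow> card K \<le> 2 \<Longrightarrow> (\<Sum>x\<in>K. f x) < 1"
    and "\<And>C. is_odd_cycle E C \<Longrightarrow> (\<Sum>x\<in>C. f x) < (real (card C) - 1) / 2"
  shows "f \<in> interior (TSTAB E)"
proof (rule interior_of_strict_sum_constraints[where A =
    "(\<lambda>K. (K, 1)) ` {K. is_clique E K \<and> card K \<le> 2} \<union> (\<lambda>C. (C, (real (card C) - 1) / 2)) ` Collect (is_odd_cycle E)"])
  fix g :: "'a \<Rightarrow> real"
  assume "\<And>x. 0 \<le> g x" and le: "\<And>S b. (S, b) \<in>
    (\<lambda>K. (K, 1)) ` {K. is_clique E K \<and> card K \<le> 2} \<union> (\<lambda>C. (C, (real (card C) - 1) / 2)) ` Collect (is_odd_cycle E)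
    \<Longrightarrow> (\<Sum>x\<in>S. g x) \<le> b"
  moreover have "g x \<le> 1" for x
    using le[of "{x}" 1] by (simp add: is_clique_def)
  moreover have "g x + g y \<le> 1" if "E x y" for x y
  proof -
    have "x \<noteq> y" "is_clique E {x, y}"
      using assms(1) that unfolding simple_graph_def is_clique_def by auto
    moreover have "card {x, y} \<le> 2"
      by (simp add: card_insert_le_m1)
    ultimately show ?thesis
      using le[of "{x, y}" 1] by simp
  qed
  moreover have "(\<Sum>x\<in>C. g x) \<le> (real (card C) - 1) / 2" if "is_odd_cycle E C" for C
    using le[of C "(real (card C) - 1) / 2"] that by blast
  ultimately show "g \<in> TSTAB E"
    unfolding TSTAB_def by blast
qed (use assms in auto)

lemma HSTAB_trace_subset_degree_ge:
  fixes E :: "'v::finite \<Rightarrow> 'v \<Rightarrow> bool"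
  assumes "simple_graph E" "is_maximal_clique E K1" "is_maximal_clique E K2"
  shows "module_trace (ehrhart_ring (HSTAB E) :: (('v option \<Rightarrow>\<^sub>0 int) \<Rightarrow>\<^sub>0 'k::field) set)
      (ehrhart_canonical (HSTAB E))
    \<subseteq> degree_ge (ehrhart_ring (HSTAB E)) (int (card K1) - int (card K2))"
proof (rule ehrhart_trace_subset_degree_ge_witnesses)
  have K2_max: "K = K2" if "is_clique E K" "K2 \<subseteq> K" for K
    using assms(3) that unfolding is_maximal_clique_def by blast
  show "0 \<le> f x" "(\<Sum>x\<in>K1. f x) \<le> 1" "(\<Sum>x\<in>K2. f x) \<le> 1" if "f \<in> HSTAB E" for f x
    using that assms(2,3) unfolding HSTAB_def is_maximal_clique_def by auto
  show "restr_ratio uniform_exp \<in> interior (HSTAB E)"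
    by (intro HSTAB_interiorI uniform_point_pos uniform_point_sum_less uniform_point_cycle_sum_less
        odd_cycle_card)
  show "restr_ratio (near_facet_exp K2) \<in> interior (HSTAB E)"
  proof (intro HSTAB_interiorI near_facet_point_pos)
    show "(\<Sum>x\<in>K. restr_ratio (near_facet_exp K2) x) < 1" if "is_clique E K" for K
      using K2_max[OF that] by (intro near_facet_point_sum_less) blast
    show "(\<Sum>x\<in>C. restr_ratio (near_facet_exp K2) x) < (real (card C) - 1) / 2"
      if "is_odd_cycle E C" for C
      using that odd_cycle_card[OF that] maximal_clique_nonempty[OF assms(3)]
        K2_max[OF triangle_is_clique[OF assms(1) that]]
      by (intro near_facet_point_cycle_sum_less) auto
  qed
qed

lemma QSTAB_trace_subset_degree_ge:
  fixes E :: "'v::finite \<Rightarrow> 'v \<Rightarrow> bool"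
  assumes "is_maximal_clique E K1" "is_maximal_clique E K2"
  shows "module_trace (ehrhart_ring (QSTAB E) :: (('v option \<Rightarrow>\<^sub>0 int) \<Rightarrow>\<^sub>0 'k::field) set)
      (ehrhart_canonical (QSTAB E))
    \<subseteq> degree_ge (ehrhart_ring (QSTAB E)) (int (card K1) - int (card K2))"
proof (rule ehrhart_trace_subset_degree_ge_witnesses)
  show "0 \<le> f x" "(\<Sum>x\<in>K1. f x) \<le> 1" "(\<Sum>x\<in>K2. f x) \<le> 1" if "f \<in> QSTAB E" for f x
    using that assms unfolding QSTAB_def is_maximal_clique_def by auto
  show "restr_ratio uniform_exp \<in> interior (QSTAB E)"
    by (intro QSTAB_interiorI uniform_point_pos uniform_point_sum_less)
  show "restr_ratio (near_facet_exp K2) \<in> interior (QSTAB E)"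
    using assms(2) unfolding is_maximal_clique_def
    by (intro QSTAB_interiorI near_facet_point_pos near_facet_point_sum_less) blast
qed

lemma TSTAB_trace_subset_degree_ge:
  fixes E :: "'v::finite \<Rightarrow> 'v \<Rightarrow> bool"
  assumes "simple_graph E" "is_maximal_small_clique E K1" "is_maximal_small_clique E K2"
  shows "module_trace (ehrhart_ring (TSTAB E) :: (('v option \<Rightarrow>\<^sub>0 int) \<Rightarrow>\<^sub>0 'k::field) set)
      (ehrhart_canonical (TSTAB E))
    \<subseteq> degree_ge (ehrhart_ring (TSTAB E)) (int (card K1) - int (card K2))"
proof (rule ehrhart_trace_subset_degree_ge_witnesses)
  have K2_max: "K = K2" if "is_clique E K" "card K \<le> 3" "K2 \<subseteq> K" for K
    using assms(3) that unfolding is_maximal_small_clique_def small_cliques_def by blast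
  show "0 \<le> f x" if "f \<in> TSTAB E" for f x
    using that unfolding TSTAB_def by auto
  show "(\<Sum>x\<in>K1. f x) \<le> 1" "(\<Sum>x\<in>K2. f x) \<le> 1" if "f \<in> TSTAB E" for f
    using TSTAB_clique_sum_le[OF that] assms(2,3)
    unfolding is_maximal_small_clique_def small_cliques_def by auto
  show "restr_ratio uniform_exp \<in> interior (TSTAB E)"
    by (intro TSTAB_interiorI assms(1) uniform_point_pos uniform_point_sum_less
        uniform_point_cycle_sum_less odd_cycle_card)
  show "restr_ratio (near_facet_exp K2) \<in> interior (TSTAB E)"
  proof (intro TSTAB_interiorI assms(1) near_facet_point_pos)
    show "(\<Sum>x\<in>K. restr_ratio (near_facet_exp K2) x) < 1" if "is_clique E K" "card K \<le> 2" for K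
      using K2_max[OF that(1)] that(2) by (intro near_facet_point_sum_less) simp
    show "(\<Sum>x\<in>C. restr_ratio (near_facet_exp K2) x) < (real (card C) - 1) / 2"
      if "is_odd_cycle E C" for C
      using that odd_cycle_card[OF that] maximal_small_clique_nonempty[OF assms(3)]
        K2_max[OF triangle_is_clique[OF assms(1) that]]
      by (intro near_facet_point_cycle_sum_less) auto
  qed
qed

theorem lemma4p1:
  fixes E :: "'v::finite \<Rightarrow> 'v \<Rightarrow> bool"
  assumes "simple_graph E"
  shows
  "(\<forall>K1 K2. is_maximal_clique E K1 \<and> is_maximal_clique E K2 \<and> card K2 < card K1 \<longrightarrow>
      module_trace (ehrhart_ring (HSTAB E) :: (('v option \<Rightarrow>\<^sub>0 int) \<Rightarrow>\<^sub>0 'k::field) set)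
                   (ehrhart_canonical (HSTAB E))
      \<subseteq> degree_ge (ehrhart_ring (HSTAB E)) (int (card K1) - int (card K2)))
   \<and> (\<forall>K1 K2. is_maximal_clique E K1 \<and> is_maximal_clique E K2 \<and> card K2 < card K1 \<longrightarrow>
      module_trace (ehrhart_ring (QSTAB E) :: (('v option \<Rightarrow>\<^sub>0 int) \<Rightarrow>\<^sub>0 'k) set)
                   (ehrhart_canonical (QSTAB E))
      \<subseteq> degree_ge (ehrhart_ring (QSTAB E)) (int (card K1) - int (card K2)))
   \<and> (\<forall>K1 K2. is_maximal_small_clique E K1 \<and> is_maximal_small_clique E K2 \<and> card K2 < card K1 \<longrightarrow>
      module_trace (ehrhart_ring (TSTAB E) :: (('v option \<Rightarrow>\<^sub>0 int) \<Rightarrow>\<^sub>0 'k) set)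
                   (ehrhart_canonical (TSTAB E))
      \<subseteq> degree_ge (ehrhart_ring (TSTAB E)) (int (card K1) - int (card K2)))"
  using HSTAB_trace_subset_degree_ge[OF assms] QSTAB_trace_subset_degree_ge
    TSTAB_trace_subset_degree_ge[OF assms] by blast

end
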